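(* Let $U:\mathbb{R}^d\to[0,+\infty)$ be convex and $M$-Lipschitz with $M\ge0$. Then for any $\kappa>0$ and $z,z'\in\mathbb{R}^d$, $$\langle\mathrm{prox}^\kappa_U(z)-z,z\rangle\le-\kappa U(z)+\kappa^2M^2+\kappa\{U(z')+M\|z'\|\}.$$
   Context: $\mathrm{prox}^\kappa_U(x)=\arg\min_{\tilde x\in\mathbb{R}^d}\{U(\tilde x)+\|x-\tilde x\|^2/(2\kappa)\}$; $\|\cdot\|$ Euclidean. *)

theory Defs
  imports "HOL-Analysis.Analysis"
begin

definition prox :: "real \<Rightarrow> ('a::euclidean_space \<Rightarrow> real) \<Rightarrow> 'a \<Rightarrow> 'a" where
  "prox \<kappa> U x = arg_min (\<lambda>y. U y + (norm (x - y))\<^sup>2 / (2 * \<kappa>)) (\<lambda>_. True)"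

end

theory Submission
  imports Defs
begin

text \<open>Write \<open>p = prox \<kappa> U z\<close>. Comparing the proximal objective at \<open>p\<close> with its values along the
segment from \<open>p\<close> towards any \<open>y\<close> and using convexity of \<open>U\<close> gives the variational inequality
\<open>\<langle>z - p, y - p\<rangle> \<le> \<kappa> (U y - U p)\<close>, i.e. \<open>(z - p)/\<kappa>\<close> is a subgradient of \<open>U\<close> at \<open>p\<close>. With \<open>y = 0\<close>,
\<open>\<langle>p - z, z\<rangle> = -\<parallel>z - p\<parallel>\<^sup>2 + \<langle>z - p, 0 - p\<rangle> \<le> -\<parallel>z - p\<parallel>\<^sup>2 + \<kappa> (U 0 - U p)\<close>; the Lipschitz bounds
\<open>U z \<le> U p + M \<parallel>z - p\<parallel>\<close> and \<open>U 0 \<le> U z' + M \<parallel>z'\<parallel>\<close> then leave the term \<open>-r\<^sup>2 + \<kappa> M r\<close> with \<open>r = \<parallel>z - p\<parallel>\<close>,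
which is at most \<open>\<kappa>\<^sup>2 M\<^sup>2\<close>. The minimizer \<open>p\<close> exists because the objective is continuous and
coercive.\<close>

lemma nonneg_if_nonneg_plus_small_multiple:
  fixes a c :: real
  assumes "\<And>t. 0 < t \<Longrightarrow> t \<le> 1 \<Longrightarrow> 0 \<le> a + t * c"
  shows "0 \<le> a"
proof (rule tendsto_lowerbound)
  show "((\<lambda>t. a + t * c) \<longlongrightarrow> a) (at_right 0)"
    by (auto intro!: tendsto_eq_intros)
  have "\<forall>\<^sub>F t in at_right (0::real). 0 < t \<and> t \<le> 1"
    by (auto simp: eventually_at_right_field intro: exI[of _ 1])
  then show "\<forall>\<^sub>F t in at_right 0. 0 \<le> a + t * c"
    by (rule eventually_mono) (use assms in blast)
qed simp

lemma continuous_attains_min_if_bounded_sublevel: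
  fixes f :: "'a::heine_borel \<Rightarrow> real"
  assumes "continuous_on UNIV f" and "bounded {y. f y \<le> f a}"
  obtains q where "\<And>y. f q \<le> f y"
proof -
  let ?S = "{y. f y \<le> f a}"
  have "compact ?S"
    using assms by (simp add: compact_eq_bounded_closed closed_Collect_le continuous_on_const)
  moreover have "continuous_on ?S f"
    using assms(1) by (rule continuous_on_subset) simp
  ultimately obtain q where q: "q \<in> ?S" "\<And>y. y \<in> ?S \<Longrightarrow> f q \<le> f y"
    using continuous_attains_inf[of ?S f] by blast
  have "f q \<le> f y" for y
    using q by (cases "y \<in> ?S") force+
  then show thesis by (rule that)
qed

lemma prox_minimizes:
  fixes U :: "'a::euclidean_space \<Rightarrow> real"
  assumes "continuous_on UNIV U" and "\<And>y. b \<le> U y" and "\<kappa> > 0"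
  shows "U (prox \<kappa> U x) + (norm (x - prox \<kappa> U x))\<^sup>2 / (2 * \<kappa>) \<le> U y + (norm (x - y))\<^sup>2 / (2 * \<kappa>)"
proof -
  define f where "f y = U y + (norm (x - y))\<^sup>2 / (2 * \<kappa>)" for y
  have "continuous_on UNIV f"
    unfolding f_def using assms(1,3) by (intro continuous_intros) auto
  moreover have "bounded {y. f y \<le> f x}"
  proof -
    have "dist x y \<le> sqrt (2 * \<kappa> * (f x - b))" if "f y \<le> f x" for y
    proof -
      have "(norm (x - y))\<^sup>2 / (2 * \<kappa>) \<le> f x - b"
        using that assms(2)[of y] by (simp add: f_def)
      then have "(norm (x - y))\<^sup>2 \<le> 2 * \<kappa> * (f x - b)"
        using assms(3) by (simp add: field_simps)
      then show ?thesis
        by (simp add: dist_norm real_le_rsqrt)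
    qed
    then show ?thesis
      unfolding bounded_def by blast
  qed
  ultimately obtain q where "\<And>y. f q \<le> f y"
    using continuous_attains_min_if_bounded_sublevel[of f x] by blast
  then have "f (arg_min f (\<lambda>_. True)) = f q"
    by (intro arg_min_equality) auto
  with \<open>\<And>y. f q \<le> f y\<close> show ?thesis
    by (simp add: prox_def f_def[abs_def])
qed

lemma norm_diff_scaleR_power2:
  fixes u v :: "'a::real_inner"
  shows "(norm (u - t *\<^sub>R v))\<^sup>2 = (norm u)\<^sup>2 - 2 * t * inner u v + t\<^sup>2 * (norm v)\<^sup>2"
  unfolding power2_norm_eq_inner
  by (simp add: inner_diff_left inner_diff_right inner_commute power2_eq_square algebra_simps)

lemma proximal_variational_inequality:
  fixes U :: "'a::real_inner \<Rightarrow> real"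
  assumes "convex_on UNIV U" and "\<kappa> > 0"
    and min: "\<And>w. U p + (norm (x - p))\<^sup>2 / (2 * \<kappa>) \<le> U w + (norm (x - w))\<^sup>2 / (2 * \<kappa>)"
  shows "inner (x - p) (y - p) \<le> \<kappa> * (U y - U p)"
proof -
  have "0 \<le> (U y - U p - inner (x - p) (y - p) / \<kappa>) + t * ((norm (y - p))\<^sup>2 / (2 * \<kappa>))"
    if t: "0 < t" "t \<le> 1" for t
  proof -
    have "U (p + t *\<^sub>R (y - p)) \<le> (1 - t) * U p + t * U y"
      using convex_onD[OF assms(1), of t p y] t by (simp add: algebra_simps)
    moreover have "x - (p + t *\<^sub>R (y - p)) = (x - p) - t *\<^sub>R (y - p)"
      by simp
    ultimately have "U p + (norm (x - p))\<^sup>2 / (2 * \<kappa>) \<le> (1 - t) * U p + t * U y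
        + ((norm (x - p))\<^sup>2 - 2 * t * inner (x - p) (y - p) + t\<^sup>2 * (norm (y - p))\<^sup>2) / (2 * \<kappa>)"
      using min[of "p + t *\<^sub>R (y - p)"] by (simp only: norm_diff_scaleR_power2)
    then have "0 \<le> t * (U y - U p) + (t\<^sup>2 * (norm (y - p))\<^sup>2 - 2 * t * inner (x - p) (y - p)) / (2 * \<kappa>)"
      by (simp add: add_divide_distrib diff_divide_distrib algebra_simps)
    also have "\<dots> = t * ((U y - U p - inner (x - p) (y - p) / \<kappa>) + t * ((norm (y - p))\<^sup>2 / (2 * \<kappa>)))"
      using assms(2) by (simp add: field_simps power2_eq_square)
    finally show ?thesis
      using t by (simp add: zero_le_mult_iff)
  qed
  then have "0 \<le> U y - U p - inner (x - p) (y - p) / \<kappa>"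
    by (rule nonneg_if_nonneg_plus_small_multiple)
  with assms(2) show ?thesis
    by (simp add: field_simps)
qed

theorem lemma10:
  fixes U :: "'a::euclidean_space \<Rightarrow> real" and M \<kappa> :: real and z z' :: 'a
  assumes "\<And>x. U x \<ge> 0"
    and "convex_on UNIV U"
    and "M-lipschitz_on UNIV U"
    and "M \<ge> 0"
    and "\<kappa> > 0"
  shows "inner (prox \<kappa> U z - z) z \<le> - \<kappa> * U z + \<kappa>\<^sup>2 * M\<^sup>2 + \<kappa> * (U z' + M * norm z')"
proof -
  define p where "p = prox \<kappa> U z"
  define r where "r = norm (z - p)"
  have "continuous_on UNIV U"
    using assms(3) by (rule lipschitz_on_continuous_on)
  then have "\<And>w. U p + (norm (z - p))\<^sup>2 / (2 * \<kappa>) \<le> U w + (norm (z - w))\<^sup>2 / (2 * \<kappa>)"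
    unfolding p_def using assms(1,5) by (rule prox_minimizes)
  then have subgradient: "inner (z - p) (0 - p) \<le> \<kappa> * (U 0 - U p)"
    using assms(2,5) by (intro proximal_variational_inequality)
  have "U z \<le> U p + M * r" and "U 0 \<le> U z' + M * norm z'"
    using lipschitz_onD[OF assms(3), of z p] lipschitz_onD[OF assms(3), of 0 z']
    by (auto simp: r_def dist_norm dist_real_def)
  with assms(5) have "\<kappa> * (U 0 - U p) \<le> \<kappa> * (M * r + U z' + M * norm z' - U z)"
    by (intro mult_left_mono) auto
  moreover have "inner (p - z) z = - r\<^sup>2 + inner (z - p) (0 - p)"
    by (simp add: r_def power2_norm_eq_inner inner_diff_left inner_diff_right inner_commute algebra_simps)
  moreover have "- r\<^sup>2 + \<kappa> * M * r \<le> \<kappa>\<^sup>2 * M\<^sup>2"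
    using zero_le_power2[of "r - \<kappa> * M / 2"] zero_le_power2[of "\<kappa> * M"]
    by (simp add: power2_eq_square algebra_simps)
  ultimately show ?thesis
    using subgradient by (simp add: p_def algebra_simps)
qed

end
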